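(* Let $\mathbb{F}$ be a field, $p,q\in\mathbb{F}[t]$ monic of degree $2$, $\mathcal{W}_{p,q}=\mathbb{F}\langle a,b\rangle/(p(a),q(b))$. Let $\gamma\in\mathcal{W}_{p,q}^\times$ and let $x\in(\mathbb{F}[a]\cup\mathbb{F}[b])\setminus\mathbb{F}$ be a nonscalar basic vector. If $\gamma x\gamma^{-1}$ is basic (i.e. lies in $\mathbb{F}[a]\cup\mathbb{F}[b]$), then $\gamma x\gamma^{-1}=x$.
   Context: $\mathcal{W}_{p,q}$ is the quotient of the free associative unital $\mathbb{F}$-algebra on two noncommuting generators by the two-sided ideal generated by $p(a)$ and $q(b)$; $\mathbb{F}[a]$ and $\mathbb{F}[b]$ are $2$-dimensional subalgebras. *)

theory Defs
  imports "HOL-Computational_Algebra.Polynomial"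
begin

text \<open>The free associative unital algebra F<a,b> is modelled as finitely supported
  functions from words over the alphabet {a,b} (encoded as bool lists, True = a,
  False = b) to F, with concatenation-convolution product. The quotient W_{p,q}
  is handled via congruence modulo the two-sided ideal generated by p(a), q(b).\<close>

definition fa :: "(bool list \<Rightarrow> 'a::field) set" where
  "fa = {f. finite {w. f w \<noteq> 0}}"

definition fa_mult :: "(bool list \<Rightarrow> 'a::field) \<Rightarrow> (bool list \<Rightarrow> 'a) \<Rightarrow> bool list \<Rightarrow> 'a"
  (infixl "\<star>" 70) where
  "fa_mult f g w = (\<Sum>i\<le>length w. f (take i w) * g (drop i w))"

definition fa_sc :: "'a::field \<Rightarrow> bool list \<Rightarrow> 'a" where
  "fa_sc c w = (if w = [] then c else 0)"

definition gen_a :: "bool list \<Rightarrow> 'a::field" where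
  "gen_a w = (if w = [True] then 1 else 0)"

definition gen_b :: "bool list \<Rightarrow> 'a::field" where
  "gen_b w = (if w = [False] then 1 else 0)"

primrec fa_pow :: "(bool list \<Rightarrow> 'a::field) \<Rightarrow> nat \<Rightarrow> bool list \<Rightarrow> 'a" where
  "fa_pow x 0 = fa_sc 1"
| "fa_pow x (Suc n) = x \<star> fa_pow x n"

definition fa_poly :: "'a::field poly \<Rightarrow> (bool list \<Rightarrow> 'a) \<Rightarrow> bool list \<Rightarrow> 'a" where
  "fa_poly r x = (\<lambda>w. \<Sum>i\<le>degree r. (fa_sc (coeff r i) \<star> fa_pow x i) w)"

inductive_set W_ideal :: "'a::field poly \<Rightarrow> 'a poly \<Rightarrow> (bool list \<Rightarrow> 'a) set"
  for p q where
  gen_p: "fa_poly p gen_a \<in> W_ideal p q"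
| gen_q: "fa_poly q gen_b \<in> W_ideal p q"
| zero: "(\<lambda>w. 0) \<in> W_ideal p q"
| add: "u \<in> W_ideal p q \<Longrightarrow> v \<in> W_ideal p q \<Longrightarrow> (\<lambda>w. u w + v w) \<in> W_ideal p q"
| mult_left: "s \<in> fa \<Longrightarrow> u \<in> W_ideal p q \<Longrightarrow> s \<star> u \<in> W_ideal p q"
| mult_right: "s \<in> fa \<Longrightarrow> u \<in> W_ideal p q \<Longrightarrow> u \<star> s \<in> W_ideal p q"

definition W_eq :: "'a::field poly \<Rightarrow> 'a poly \<Rightarrow> (bool list \<Rightarrow> 'a) \<Rightarrow> (bool list \<Rightarrow> 'a) \<Rightarrow> bool" where
  "W_eq p q x y \<longleftrightarrow> (\<lambda>w. x w - y w) \<in> W_ideal p q"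

definition W_basic :: "'a::field poly \<Rightarrow> 'a poly \<Rightarrow> (bool list \<Rightarrow> 'a) \<Rightarrow> bool" where
  "W_basic p q x \<longleftrightarrow> (\<exists>r. W_eq p q x (fa_poly r gen_a) \<or> W_eq p q x (fa_poly r gen_b))"

definition W_scalar :: "'a::field poly \<Rightarrow> 'a poly \<Rightarrow> (bool list \<Rightarrow> 'a) \<Rightarrow> bool" where
  "W_scalar p q x \<longleftrightarrow> (\<exists>c. W_eq p q x (fa_sc c))"

end

theory Submission
  imports Defs
begin

text \<open>Abelianization maps F<a,b> onto F[a,b] and the defining ideal of W into the ideal generated by
  p(a) and q(b). Conjugation is trivial in the commutative quotient, so \<gamma> x \<gamma>\<inverse> and x have the
  same image there. Reducing modulo p and q, a basic element is congruent in W to r(a) or r(b) with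
  deg r \<le> 1, and the commutative quotient has basis 1, a, b, ab; so the image of such a reduced form
  determines it as soon as r is not constant. Hence \<gamma> x \<gamma>\<inverse> and x have the same reduced form.\<close>

lemma fa_sc_mult: "fa_sc c \<star> g = (\<lambda>w. c * g w)"
proof
  fix w :: "bool list"
  show "(fa_sc c \<star> g) w = c * g w"
    by (cases w) (simp_all add: fa_mult_def fa_sc_def sum.atMost_Suc_shift del: sum.atMost_Suc)
qed

lemma fa_sc_in_fa: "fa_sc c \<in> fa"
proof -
  have "{w. fa_sc c w \<noteq> 0} \<subseteq> {[]}" by (auto simp: fa_sc_def)
  then show ?thesis unfolding fa_def by (auto intro: finite_subset)
qed

lemma fa_add_in_fa: "u \<in> fa \<Longrightarrow> v \<in> fa \<Longrightarrow> (\<lambda>w. u w + v w) \<in> fa"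
  unfolding fa_def by (auto intro: finite_subset[of _ "{w. u w \<noteq> 0} \<union> {w. v w \<noteq> 0}"])

lemma support_fa_mult_subset:
  "{w. (f \<star> g) w \<noteq> 0} \<subseteq> (\<lambda>(u, v). u @ v) ` ({w. f w \<noteq> 0} \<times> {w. g w \<noteq> 0})"
proof
  fix w assume "w \<in> {w. (f \<star> g) w \<noteq> 0}"
  then obtain i where "f (take i w) * g (drop i w) \<noteq> 0"
    unfolding fa_mult_def by (auto elim: sum.not_neutral_contains_not_neutral)
  then have "(take i w, drop i w) \<in> {w. f w \<noteq> 0} \<times> {w. g w \<noteq> 0}"
    by simp
  moreover have "w = (\<lambda>(u, v). u @ v) (take i w, drop i w)"
    by simp
  ultimately show "w \<in> (\<lambda>(u, v). u @ v) ` ({w. f w \<noteq> 0} \<times> {w. g w \<noteq> 0})"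
    by (rule rev_image_eqI)
qed

lemma fa_mult_in_fa: "f \<in> fa \<Longrightarrow> g \<in> fa \<Longrightarrow> f \<star> g \<in> fa"
  unfolding fa_def using support_fa_mult_subset[of f g] by (auto intro: finite_subset)

definition letter :: "bool \<Rightarrow> bool list \<Rightarrow> 'a::field" where
  "letter c w = (if w = [c] then 1 else 0)"

lemma gen_a_eq_letter: "gen_a = letter True"
  by (simp add: fun_eq_iff gen_a_def letter_def)

lemma gen_b_eq_letter: "gen_b = letter False"
  by (simp add: fun_eq_iff gen_b_def letter_def)

lemma letter_mult_Nil: "(letter c \<star> g) [] = 0"
  by (simp add: fa_mult_def letter_def)

lemma letter_mult_Cons: "(letter c \<star> g) (d # w) = (if d = c then g w else 0)"
proof -
  have "(letter c \<star> g) (d # w) = (\<Sum>i\<le>length w. letter c (d # take i w) * g (drop i w))"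
    by (simp add: fa_mult_def sum.atMost_Suc_shift letter_def del: sum.atMost_Suc)
  also have "\<dots> = (\<Sum>i\<le>length w. if i = 0 then letter c [d] * g w else 0)"
    by (rule sum.cong) (auto simp: letter_def)
  finally show ?thesis by (simp add: letter_def)
qed

lemma fa_pow_letter: "fa_pow (letter c) n w = (if w = replicate n c then 1 else 0)"
proof (induction n arbitrary: w)
  case 0
  then show ?case by (simp add: fa_sc_def)
next
  case (Suc n)
  show ?case
    by (cases w) (simp_all add: Suc.IH letter_mult_Nil letter_mult_Cons)
qed

lemma fa_poly_letter:
  "fa_poly r (letter c) w = (if set w \<subseteq> {c} then coeff r (length w) else 0)"
proof -
  have "fa_poly r (letter c) w = (\<Sum>i\<le>degree r. coeff r i * (if w = replicate i c then 1 else 0))"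
    by (simp add: fa_poly_def fa_sc_mult fa_pow_letter)
  also have "\<dots> = (\<Sum>i\<le>degree r. if i = length w \<and> set w \<subseteq> {c} then coeff r i else 0)"
    by (rule sum.cong) (auto intro: replicate_eqI)
  also have "\<dots> = (if set w \<subseteq> {c} then coeff r (length w) else 0)"
    by (auto simp: coeff_eq_0)
  finally show ?thesis .
qed

lemma support_fa_poly_letter_subset:
  "{w. fa_poly r (letter c) w \<noteq> 0} \<subseteq> (\<lambda>k. replicate k c) ` {..degree r}"
proof
  fix w assume "w \<in> {w. fa_poly r (letter c) w \<noteq> 0}"
  then have "set w \<subseteq> {c}" "coeff r (length w) \<noteq> 0"
    by (auto simp: fa_poly_letter split: if_splits)
  then show "w \<in> (\<lambda>k. replicate k c) ` {..degree r}"
    by (intro image_eqI[where x = "length w"]) (auto intro: replicate_eqI le_degree)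
qed

lemma fa_poly_letter_in_fa: "fa_poly r (letter c) \<in> fa"
  unfolding fa_def mem_Collect_eq by (rule finite_subset[OF support_fa_poly_letter_subset]) simp

lemma fa_poly_letter_diff:
  "fa_poly (r - s) (letter c) = (\<lambda>w. fa_poly r (letter c) w - fa_poly s (letter c) w)"
  by (simp add: fun_eq_iff fa_poly_letter)

lemma fa_poly_letter_const: "fa_poly [:a:] (letter c) = fa_sc a"
  by (simp add: fun_eq_iff fa_poly_letter fa_sc_def coeff_pCons split: nat.split)

lemma fa_poly_letter_mult:
  "fa_poly (r * s) (letter c) = fa_poly r (letter c) \<star> fa_poly s (letter c)"
proof
  fix w :: "bool list"
  have set_split: "set w \<subseteq> {c} \<longleftrightarrow> set (take i w) \<subseteq> {c} \<and> set (drop i w) \<subseteq> {c}" for i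
    by (metis append_take_drop_id set_append Un_subset_iff)
  show "fa_poly (r * s) (letter c) w = (fa_poly r (letter c) \<star> fa_poly s (letter c)) w"
  proof (cases "set w \<subseteq> {c}")
    case True
    then show ?thesis
      using set_split by (simp add: fa_mult_def fa_poly_letter coeff_mult)
  next
    case False
    have "fa_poly r (letter c) (take i w) * fa_poly s (letter c) (drop i w) = 0" for i
      using False set_split[of i] by (simp add: fa_poly_letter)
    then have "(fa_poly r (letter c) \<star> fa_poly s (letter c)) w = 0"
      unfolding fa_mult_def by (intro sum.neutral) blast
    then show ?thesis
      using False by (simp add: fa_poly_letter)
  qed
qed

lemma W_ideal_imp_fa: "u \<in> W_ideal p q \<Longrightarrow> u \<in> fa"
proof (induction rule: W_ideal.induct)
  case zero
  show ?case by (simp add: fa_def)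
qed (simp_all add: gen_a_eq_letter gen_b_eq_letter fa_poly_letter_in_fa fa_add_in_fa fa_mult_in_fa)

lemma W_eq_sym: "W_eq p q x y \<Longrightarrow> W_eq p q y x"
proof -
  assume "W_eq p q x y"
  then have "fa_sc (-1) \<star> (\<lambda>w. x w - y w) \<in> W_ideal p q"
    unfolding W_eq_def by (rule W_ideal.mult_left[OF fa_sc_in_fa])
  then show "W_eq p q y x"
    unfolding W_eq_def fa_sc_mult by simp
qed

lemma W_eq_trans: "W_eq p q x y \<Longrightarrow> W_eq p q y z \<Longrightarrow> W_eq p q x z"
  unfolding W_eq_def using W_ideal.add by fastforce

lemma W_eq_fa_poly_letter_if_dvd:
  assumes "(if c then p else q) dvd r - s"
  shows "W_eq p q (fa_poly r (letter c)) (fa_poly s (letter c))"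
proof -
  obtain k where k: "r - s = (if c then p else q) * k"
    using assms by blast
  have "fa_poly (if c then p else q) (letter c) \<in> W_ideal p q"
    by (cases c) (simp_all add: W_ideal.gen_p W_ideal.gen_q flip: gen_a_eq_letter gen_b_eq_letter)
  then have "fa_poly (if c then p else q) (letter c) \<star> fa_poly k (letter c) \<in> W_ideal p q"
    by (rule W_ideal.mult_right[OF fa_poly_letter_in_fa])
  then show ?thesis
    unfolding W_eq_def by (simp add: fa_poly_letter_diff[symmetric] k fa_poly_letter_mult)
qed

lemma W_basic_reduced:
  assumes "degree p = 2" "degree q = 2" "W_basic p q z"
  obtains r c where "degree r \<le> 1" "W_eq p q z (fa_poly r (letter c))"
proof -
  obtain r c where z: "W_eq p q z (fa_poly r (letter c))"
    using assms(3) unfolding W_basic_def gen_a_eq_letter gen_b_eq_letter by blast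
  define m where "m = (if c then p else q)"
  have "m \<noteq> 0" "degree m = 2"
    using assms(1,2) by (auto simp: m_def)
  have "W_eq p q (fa_poly r (letter c)) (fa_poly (r mod m) (letter c))"
    by (rule W_eq_fa_poly_letter_if_dvd) (simp add: m_def[symmetric])
  with z have "W_eq p q z (fa_poly (r mod m) (letter c))"
    by (rule W_eq_trans)
  moreover have "degree (r mod m) \<le> 1"
    using degree_mod_less[OF \<open>m \<noteq> 0\<close>, of r] \<open>degree m = 2\<close> by auto
  ultimately show ?thesis
    using that by blast
qed

lemma W_scalar_if_linear_coeff_eq_0:
  assumes "degree r \<le> 1" "coeff r 1 = 0" "W_eq p q z (fa_poly r (letter c))"
  shows "W_scalar p q z"
proof -
  have "coeff r (Suc n) = 0" for n
    using assms(1,2) by (cases n) (auto simp: coeff_eq_0)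
  then have "r = [:coeff r 0:]"
    by (intro poly_eqI) (simp add: coeff_pCons split: nat.split)
  then show ?thesis
    using assms(3) unfolding W_scalar_def by (metis fa_poly_letter_const)
qed

lemma splits_eq_image: "{(u, v). u @ v = w} = (\<lambda>i. (take i w, drop i w)) ` {..length w}"
proof -
  have "(u, v) \<in> (\<lambda>i. (take i w, drop i w)) ` {..length w}" if "u @ v = w" for u v
    using that by (intro image_eqI[where x = "length u"]) auto
  then show ?thesis by auto
qed

lemma finite_splits: "finite {(u, v). u @ v = w}"
  by (simp add: splits_eq_image)

lemma fa_mult_conv_splits: "(f \<star> g) w = (\<Sum>(u, v)\<in>{(u, v). u @ v = w}. f u * g v)"
proof -
  have "inj_on (\<lambda>i. (take i w, drop i w)) {..length w}"
    by (rule inj_onI) (metis atMost_iff length_take min.absorb2 prod.inject)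
  then show ?thesis
    unfolding fa_mult_def splits_eq_image by (simp add: sum.reindex)
qed

lemma count_list_replicate: "count_list (replicate k c) d = (if c = d then k else 0)"
  by (induction k) auto

text \<open>The abelianization F<a,b> \<rightarrow> F[a,b], with F[a,b] represented as F[a][b]: the letter a
  becomes the inner and the letter b the outer variable.\<close>

definition abel_term :: "'a::field \<Rightarrow> bool list \<Rightarrow> 'a poly poly" where
  "abel_term c w = monom (monom c (count_list w True)) (count_list w False)"

definition abel :: "(bool list \<Rightarrow> 'a::field) \<Rightarrow> 'a poly poly" where
  "abel f = (\<Sum>w | f w \<noteq> 0. abel_term (f w) w)"

lemma abel_term_add: "abel_term (a + b) w = abel_term a w + abel_term b w"
  by (simp add: abel_term_def add_monom)

lemma abel_term_diff: "abel_term (a - b) w = abel_term a w - abel_term b w"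
  by (simp add: abel_term_def diff_monom)

lemma abel_term_mult: "abel_term (a * b) (u @ v) = abel_term a u * abel_term b v"
  by (simp add: abel_term_def mult_monom)

lemma abel_term_sum: "abel_term (\<Sum>x\<in>A. f x) w = (\<Sum>x\<in>A. abel_term (f x) w)"
  by (simp add: abel_term_def monom_sum)

lemma abel_eq_sum_superset:
  assumes "finite S" "{w. f w \<noteq> 0} \<subseteq> S"
  shows "abel f = (\<Sum>w\<in>S. abel_term (f w) w)"
  unfolding abel_def using assms by (intro sum.mono_neutral_left) (auto simp: abel_term_def)

lemma abel_add:
  assumes "u \<in> fa" "v \<in> fa"
  shows "abel (\<lambda>w. u w + v w) = abel u + abel v"
proof -
  let ?S = "{w. u w \<noteq> 0} \<union> {w. v w \<noteq> 0}"
  have "finite ?S"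
    using assms by (simp add: fa_def)
  then have S: "abel g = (\<Sum>w\<in>?S. abel_term (g w) w)" if "g \<in> {u, v, \<lambda>w. u w + v w}" for g
    by (rule abel_eq_sum_superset) (use that in auto)
  show ?thesis
    using S[of u] S[of v] S[of "\<lambda>w. u w + v w"] by (simp add: abel_term_add sum.distrib)
qed

lemma abel_diff:
  assumes "u \<in> fa" "v \<in> fa"
  shows "abel (\<lambda>w. u w - v w) = abel u - abel v"
proof -
  let ?S = "{w. u w \<noteq> 0} \<union> {w. v w \<noteq> 0}"
  have "finite ?S"
    using assms by (simp add: fa_def)
  then have S: "abel g = (\<Sum>w\<in>?S. abel_term (g w) w)" if "g \<in> {u, v, \<lambda>w. u w - v w}" for g
    by (rule abel_eq_sum_superset) (use that in auto)
  show ?thesis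
    using S[of u] S[of v] S[of "\<lambda>w. u w - v w"] by (simp add: abel_term_diff sum_subtractf)
qed

lemma abel_fa_sc: "abel (fa_sc c) = [:[:c:]:]"
  by (subst abel_eq_sum_superset[of "{[]}"]) (auto simp: fa_sc_def abel_term_def monom_0)

lemma abel_mult:
  assumes "f \<in> fa" "g \<in> fa"
  shows "abel (f \<star> g) = abel f * abel g"
proof -
  define T where "T = {u. f u \<noteq> 0} \<times> {v. g v \<noteq> 0}"
  have "finite T"
    using assms by (simp add: T_def fa_def)
  have term_eq: "abel_term ((f \<star> g) w) w
      = (\<Sum>x\<in>{x\<in>T. (\<lambda>(u, v). u @ v) x = w}. abel_term (f (fst x)) (fst x) * abel_term (g (snd x)) (snd x))"
    for w
  proof -
    have "abel_term ((f \<star> g) w) w = (\<Sum>x\<in>{(u, v). u @ v = w}. abel_term (f (fst x) * g (snd x)) w)"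
      by (simp add: fa_mult_conv_splits abel_term_sum split_beta)
    also have "\<dots> = (\<Sum>x\<in>{x\<in>T. (\<lambda>(u, v). u @ v) x = w}. abel_term (f (fst x) * g (snd x)) w)"
      by (rule sum.mono_neutral_right) (auto simp: finite_splits T_def abel_term_def)
    also have "\<dots> = (\<Sum>x\<in>{x\<in>T. (\<lambda>(u, v). u @ v) x = w}. abel_term (f (fst x)) (fst x) * abel_term (g (snd x)) (snd x))"
      by (rule sum.cong) (auto simp flip: abel_term_mult)
    finally show ?thesis .
  qed
  have "abel (f \<star> g) = (\<Sum>w\<in>(\<lambda>(u, v). u @ v) ` T. abel_term ((f \<star> g) w) w)"
    using \<open>finite T\<close> support_fa_mult_subset[of f g] by (intro abel_eq_sum_superset) (simp_all add: T_def)
  also have "\<dots> = (\<Sum>x\<in>T. abel_term (f (fst x)) (fst x) * abel_term (g (snd x)) (snd x))"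
    unfolding term_eq using \<open>finite T\<close> by (intro sum.group) auto
  also have "\<dots> = abel f * abel g"
    by (simp add: T_def abel_def sum_product sum.cartesian_product split_beta)
  finally show ?thesis .
qed

lemma abel_fa_poly_letter:
  "abel (fa_poly r (letter c)) = (if c then [:r:] else map_poly (\<lambda>a. [:a:]) r)"
proof -
  have inj: "inj_on (\<lambda>k. replicate k c) {..degree r}"
    by (rule inj_onI) (metis length_replicate)
  have "abel (fa_poly r (letter c))
      = (\<Sum>w\<in>(\<lambda>k. replicate k c) ` {..degree r}. abel_term (fa_poly r (letter c) w) w)"
    by (rule abel_eq_sum_superset[OF _ support_fa_poly_letter_subset]) simp
  also have "\<dots> = (\<Sum>k\<le>degree r. abel_term (coeff r k) (replicate k c))"
    by (simp add: sum.reindex[OF inj] fa_poly_letter subset_iff)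
  also have "\<dots> = (if c then [:r:] else map_poly (\<lambda>a. [:a:]) r)"
  proof (cases c)
    case True
    then have "(\<Sum>k\<le>degree r. abel_term (coeff r k) (replicate k c))
        = monom (\<Sum>k\<le>degree r. monom (coeff r k) k) 0"
      by (simp add: abel_term_def count_list_replicate monom_sum)
    then show ?thesis
      using True by (simp add: poly_as_sum_of_monoms monom_0)
  next
    case False
    then show ?thesis
      by (intro poly_eqI)
         (auto simp: abel_term_def count_list_replicate monom_0 coeff_sum coeff_map_poly coeff_eq_0)
  qed
  finally show ?thesis .
qed

definition comm_ideal :: "'a::field poly \<Rightarrow> 'a poly \<Rightarrow> 'a poly poly set" where
  "comm_ideal p q = {[:p:] * A + map_poly (\<lambda>a. [:a:]) q * B | A B. True}"

lemma comm_ideal_add: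
  assumes "f \<in> comm_ideal p q" "g \<in> comm_ideal p q"
  shows "f + g \<in> comm_ideal p q"
proof -
  obtain A B A' B' where "f = [:p:] * A + map_poly (\<lambda>a. [:a:]) q * B"
      "g = [:p:] * A' + map_poly (\<lambda>a. [:a:]) q * B'"
    using assms unfolding comm_ideal_def by blast
  then have "f + g = [:p:] * (A + A') + map_poly (\<lambda>a. [:a:]) q * (B + B')"
    by (simp add: algebra_simps smult_add_right)
  then show ?thesis
    unfolding comm_ideal_def by blast
qed

lemma comm_ideal_mult:
  assumes "f \<in> comm_ideal p q"
  shows "h * f \<in> comm_ideal p q"
proof -
  obtain A B where "f = [:p:] * A + map_poly (\<lambda>a. [:a:]) q * B"
    using assms unfolding comm_ideal_def by blast
  then have "h * f = [:p:] * (h * A) + map_poly (\<lambda>a. [:a:]) q * (h * B)"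
    by (simp add: algebra_simps)
  then show ?thesis
    unfolding comm_ideal_def by blast
qed

lemma comm_ideal_diff: "f \<in> comm_ideal p q \<Longrightarrow> g \<in> comm_ideal p q \<Longrightarrow> f - g \<in> comm_ideal p q"
  using comm_ideal_add[OF _ comm_ideal_mult[of g p q "-1"]] by simp

lemma abel_in_comm_ideal: "u \<in> W_ideal p q \<Longrightarrow> abel u \<in> comm_ideal p q"
proof (induction rule: W_ideal.induct)
  case gen_p
  have "abel (fa_poly p gen_a) = [:p:] * 1 + map_poly (\<lambda>a. [:a:]) q * 0"
    by (simp add: gen_a_eq_letter abel_fa_poly_letter)
  then show ?case
    unfolding comm_ideal_def by blast
next
  case gen_q
  have "abel (fa_poly q gen_b) = [:p:] * 0 + map_poly (\<lambda>a. [:a:]) q * 1"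
    by (simp add: gen_b_eq_letter abel_fa_poly_letter)
  then show ?case
    unfolding comm_ideal_def by blast
next
  case zero
  have "abel (\<lambda>w. 0) = [:p:] * 0 + map_poly (\<lambda>a. [:a:]) q * 0"
    by (simp add: abel_def)
  then show ?case
    unfolding comm_ideal_def by blast
next
  case (add u v)
  then show ?case
    by (simp add: abel_add W_ideal_imp_fa comm_ideal_add)
next
  case (mult_left s u)
  then show ?case
    by (simp add: abel_mult W_ideal_imp_fa comm_ideal_mult)
next
  case (mult_right s u)
  then show ?case
    by (simp add: abel_mult W_ideal_imp_fa comm_ideal_mult mult.commute[of "abel u"])
qed

lemma abel_diff_in_comm_ideal:
  assumes "W_eq p q u v" "u \<in> fa" "v \<in> fa"
  shows "abel u - abel v \<in> comm_ideal p q"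
  using abel_in_comm_ideal[OF assms(1)[unfolded W_eq_def]] by (simp add: abel_diff assms(2,3))

lemma abel_conj_diff_in_comm_ideal:
  assumes "\<gamma> \<in> fa" "\<delta> \<in> fa" "x \<in> fa" "W_eq p q (\<gamma> \<star> \<delta>) (fa_sc 1)"
  shows "abel (\<gamma> \<star> x \<star> \<delta>) - abel x \<in> comm_ideal p q"
proof -
  have "abel \<gamma> * abel \<delta> - 1 \<in> comm_ideal p q"
    using abel_diff_in_comm_ideal[OF assms(4)] assms(1,2)
    by (simp add: fa_mult_in_fa fa_sc_in_fa abel_mult abel_fa_sc pCons_one)
  then have "abel x * (abel \<gamma> * abel \<delta> - 1) \<in> comm_ideal p q"
    by (rule comm_ideal_mult)
  also have "abel x * (abel \<gamma> * abel \<delta> - 1) = abel (\<gamma> \<star> x \<star> \<delta>) - abel x"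
    using assms(1-3) by (simp add: abel_mult fa_mult_in_fa algebra_simps)
  finally show ?thesis .
qed

text \<open>Elements of the span of 1, a, b, ab; for deg p = deg q = 2 this span maps isomorphically
  onto F[a]/(p) \<otimes> F[b]/(q).\<close>

definition bideg_le_1 :: "'a::zero poly poly \<Rightarrow> bool" where
  "bideg_le_1 f \<longleftrightarrow> degree f \<le> 1 \<and> (\<forall>n. degree (coeff f n) \<le> 1)"

lemma bideg_le_1_diff:
  fixes f g :: "'a::ab_group_add poly poly"
  shows "bideg_le_1 f \<Longrightarrow> bideg_le_1 g \<Longrightarrow> bideg_le_1 (f - g)"
  unfolding bideg_le_1_def by (auto intro: degree_diff_le)

lemma bideg_le_1_abel_fa_poly_letter:
  "degree r \<le> 1 \<Longrightarrow> bideg_le_1 (abel (fa_poly r (letter c)))"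
  by (cases c) (auto simp: bideg_le_1_def abel_fa_poly_letter coeff_map_poly degree_map_poly
      coeff_pCons split: nat.split)

lemma const_poly_dvd_eq_0:
  fixes f :: "'a::field poly poly"
  assumes "[:p:] dvd f" "\<And>n. degree (coeff f n) < degree p"
  shows "f = 0"
proof (rule poly_eqI)
  fix n
  have "p dvd coeff f n"
    using assms(1) by (simp add: const_poly_dvd_iff)
  then show "coeff f n = coeff 0 n"
    using assms(2)[of n] dvd_imp_degree_le by fastforce
qed

lemma comm_ideal_eq_0_if_bideg_le_1:
  fixes p q :: "'a::field poly"
  assumes "degree p = 2" "degree q = 2" "f \<in> comm_ideal p q" "bideg_le_1 f"
  shows "f = 0"
proof -
  define Q where "Q = map_poly (\<lambda>a. [:a:]) q"
  obtain A B where f: "f = [:p:] * A + Q * B"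
    using assms(3) unfolding comm_ideal_def Q_def by blast
  define B0 where "B0 = map_poly (\<lambda>b. b mod p) B"
  have "p \<noteq> 0"
    using assms(1) by auto
  have deg_B0: "degree (coeff B0 n) \<le> 1" for n
    using degree_mod_less[OF \<open>p \<noteq> 0\<close>, of "coeff B n"] assms(1) by (auto simp: B0_def coeff_map_poly)
  have "[:p:] dvd B - B0"
    by (simp add: const_poly_dvd_iff B0_def coeff_map_poly)
  then have "[:p:] dvd [:p:] * A + Q * (B - B0)"
    by (intro dvd_add dvd_triv_left dvd_mult)
  also have "[:p:] * A + Q * (B - B0) = f - Q * B0"
    by (simp add: f algebra_simps)
  finally have "[:p:] dvd f - Q * B0" .
  moreover have "degree (coeff (f - Q * B0) n) < degree p" for n
  proof -
    have "coeff (Q * B0) n = (\<Sum>i\<le>n. smult (coeff q i) (coeff B0 (n - i)))"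
      by (simp add: coeff_mult Q_def coeff_map_poly)
    also have "degree \<dots> \<le> 1"
      by (intro degree_sum_le order.trans[OF degree_smult_le deg_B0]) auto
    finally show ?thesis
      using degree_diff_le[of "coeff f n" 1 "coeff (Q * B0) n"] assms(1,4)
      by (simp add: bideg_le_1_def)
  qed
  ultimately have "f = Q * B0"
    using const_poly_dvd_eq_0 by fastforce
  have "degree Q = 2"
    using assms(2) by (simp add: Q_def degree_map_poly)
  show "f = 0"
  proof (rule ccontr)
    assume "f \<noteq> 0"
    then have "degree f = degree Q + degree B0"
      using \<open>f = Q * B0\<close> by (auto simp: degree_mult_eq)
    then show False
      using \<open>degree Q = 2\<close> assms(4) by (simp add: bideg_le_1_def)
  qed
qed

lemma abel_fa_poly_letter_coords:
  "coeff (coeff (abel (fa_poly r (letter c))) 0) 0 = coeff r 0"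
  "coeff (coeff (abel (fa_poly r (letter c))) 0) 1 = (if c then coeff r 1 else 0)"
  "coeff (coeff (abel (fa_poly r (letter c))) 1) 0 = (if c then 0 else coeff r 1)"
  by (simp_all add: abel_fa_poly_letter coeff_map_poly coeff_pCons split: nat.split)

lemma abel_fa_poly_letter_inj:
  assumes "degree r \<le> 1" "degree s \<le> 1" "coeff r 1 \<noteq> 0"
    and "abel (fa_poly s (letter d)) = abel (fa_poly r (letter c))"
  shows "s = r \<and> d = c"
proof -
  have coords: "coeff (coeff (abel (fa_poly s (letter d))) i) j
      = coeff (coeff (abel (fa_poly r (letter c))) i) j" for i j
    using assms(4) by simp
  have "d = c"
    using coords[of 0 1] coords[of 1 0] assms(3)
    unfolding abel_fa_poly_letter_coords by (auto split: if_splits)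
  have "coeff s n = coeff r n" for n
  proof -
    consider "n = 0" | "n = 1" | "n \<ge> 2"
      by linarith
    then show ?thesis
    proof cases
      case 1
      then show ?thesis
        using coords[of 0 0] unfolding abel_fa_poly_letter_coords by simp
    next
      case 2
      then show ?thesis
        using coords[of 0 1] coords[of 1 0] \<open>d = c\<close>
        unfolding abel_fa_poly_letter_coords by (cases c) simp_all
    next
      case 3
      then show ?thesis
        using assms(1,2) by (simp add: coeff_eq_0)
    qed
  qed
  then show ?thesis
    using \<open>d = c\<close> by (simp add: poly_eq_iff)
qed

lemma W_eq_if_abel_diff_in_comm_ideal:
  assumes "degree p = 2" "degree q = 2" "degree r \<le> 1" "degree s \<le> 1" "coeff r 1 \<noteq> 0"
    and "x \<in> fa" "y \<in> fa" "W_eq p q x (fa_poly r (letter c))" "W_eq p q y (fa_poly s (letter d))"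
    and "abel y - abel x \<in> comm_ideal p q"
  shows "W_eq p q y x"
proof -
  have reduce_x: "abel x - abel (fa_poly r (letter c)) \<in> comm_ideal p q"
    by (rule abel_diff_in_comm_ideal[OF assms(8,6) fa_poly_letter_in_fa])
  have reduce_y: "abel y - abel (fa_poly s (letter d)) \<in> comm_ideal p q"
    by (rule abel_diff_in_comm_ideal[OF assms(9,7) fa_poly_letter_in_fa])
  have "abel (fa_poly s (letter d)) - abel (fa_poly r (letter c))
      = (abel x - abel (fa_poly r (letter c)))
        - ((abel y - abel (fa_poly s (letter d))) - (abel y - abel x))"
    by (simp add: algebra_simps)
  also have "\<dots> \<in> comm_ideal p q"
    by (rule comm_ideal_diff[OF reduce_x comm_ideal_diff[OF reduce_y assms(10)]])
  finally have "abel (fa_poly s (letter d)) - abel (fa_poly r (letter c)) \<in> comm_ideal p q" .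
  moreover have "bideg_le_1 (abel (fa_poly s (letter d)) - abel (fa_poly r (letter c)))"
    using assms(3,4) by (intro bideg_le_1_diff bideg_le_1_abel_fa_poly_letter)
  ultimately have "abel (fa_poly s (letter d)) - abel (fa_poly r (letter c)) = 0"
    by (rule comm_ideal_eq_0_if_bideg_le_1[OF assms(1,2)])
  then have "s = r \<and> d = c"
    using abel_fa_poly_letter_inj[OF assms(3-5)] by simp
  then show ?thesis
    using assms(8,9) W_eq_sym W_eq_trans by blast
qed

theorem mainTheorem14:
  fixes p q :: "'a::field poly" and \<gamma> \<delta> x :: "bool list \<Rightarrow> 'a"
  assumes "degree p = 2" and "lead_coeff p = 1"
    and "degree q = 2" and "lead_coeff q = 1"
    and "\<gamma> \<in> fa" and "\<delta> \<in> fa" and "x \<in> fa"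
    and "W_eq p q (\<gamma> \<star> \<delta>) (fa_sc 1)" and "W_eq p q (\<delta> \<star> \<gamma>) (fa_sc 1)"
    and "W_basic p q x" and "\<not> W_scalar p q x"
    and "W_basic p q (\<gamma> \<star> x \<star> \<delta>)"
  shows "W_eq p q (\<gamma> \<star> x \<star> \<delta>) x"
proof -
  obtain r c where r: "degree r \<le> 1" "W_eq p q x (fa_poly r (letter c))"
    using W_basic_reduced[OF assms(1,3,10)] .
  obtain s d where s: "degree s \<le> 1" "W_eq p q (\<gamma> \<star> x \<star> \<delta>) (fa_poly s (letter d))"
    using W_basic_reduced[OF assms(1,3,12)] .
  have "coeff r 1 \<noteq> 0"
    using W_scalar_if_linear_coeff_eq_0[OF r(1) _ r(2)] assms(11) by blast
  have "\<gamma> \<star> x \<star> \<delta> \<in> fa"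
    using assms(5-7) by (intro fa_mult_in_fa)
  moreover have "abel (\<gamma> \<star> x \<star> \<delta>) - abel x \<in> comm_ideal p q"
    using assms(5-8) by (rule abel_conj_diff_in_comm_ideal)
  ultimately show ?thesis
    by (rule W_eq_if_abel_diff_in_comm_ideal[OF assms(1,3) r(1) s(1) \<open>coeff r 1 \<noteq> 0\<close> assms(7) _ r(2) s(2)])
qed

end
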